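(* For every integer $j\ge0$ and every $t\ge0$, $$e^{-t}\frac{t^j}{j!}=\sum_{k=j}^\infty \sigma_2(k,j)\,j!\,(-1)^{k-j}\,p_k(t),$$ the series being convergent.
   Context: $\sigma_2(k,j)$ are the Stirling numbers of the second kind; $\sigma_1(k,j)$ are the unsigned Stirling numbers of the first kind ($\sigma_1(k,j)=0$ for $k<j$, $\sigma_1(0,0)=1$); $p_k(t)=e^{-t}\sum_{m=k}^\infty \frac{t^m}{m!}\frac{\sigma_1(m,k)}{m!}$. *)

theory Defs
  imports "HOL-Analysis.Analysis" "HOL-Combinatorics.Stirling"
begin

definition p_fun :: "nat \<Rightarrow> real \<Rightarrow> real" where
  "p_fun k t = exp (- t) *
     (\<Sum>i. t ^ (i + k) / fact (i + k) * real (stirling (i + k) k) / fact (i + k))"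

end

theory Submission
  imports Defs
begin

(* Expanding every p_k(t) into its defining series turns the right-hand side into a double
   series over (k, m), which converges absolutely because \<sigma>\<^sub>2(k, j) \<le> (j + 1)^k and
   \<Sum>\<^sub>k \<sigma>\<^sub>1(m, k) = m!. Grouping its terms by the power t^m instead, the coefficient of
   e^(-t) t^m / (m!)^2 is j! \<Sum>\<^sub>k (-1)^(k - j) \<sigma>\<^sub>1(m, k) \<sigma>\<^sub>2(k, j), which by the orthogonality of
   the two kinds of Stirling numbers is j! for m = j and 0 otherwise. *)

lemma Stirling_le_Suc_power: "Stirling n k \<le> Suc k ^ n"
proof (induction n k rule: Stirling.induct)
  case (4 n k)
  have "Stirling (Suc n) (Suc k) = Suc k * Stirling n (Suc k) + Stirling n k"
    by simp
  also have "\<dots> \<le> Suc k * Suc (Suc k) ^ n + Suc k ^ n"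
    using 4 by (intro add_mono mult_le_mono2) auto
  also have "\<dots> \<le> Suc k * Suc (Suc k) ^ n + Suc (Suc k) ^ n"
    by (intro add_mono power_mono) auto
  finally show ?case
    by simp
qed auto

lemma stirling_le_fact: "stirling n k \<le> fact n"
proof (cases "k \<le> n")
  case True
  then have "stirling n k \<le> (\<Sum>k\<le>n. stirling n k)"
    by (intro member_le_sum) auto
  then show ?thesis
    by (simp add: sum_stirling)
qed simp

lemma sum_alternating_stirling_Stirling:
  "(\<Sum>k\<le>m. (-1) ^ k * of_nat (stirling m k) * of_nat (Stirling k j) :: 'a :: comm_ring_1)
     = (if m = j then (-1) ^ j else 0)"
proof -
  define T :: "nat \<Rightarrow> nat \<Rightarrow> 'a" where
    "T m j = (\<Sum>k\<le>m. (-1) ^ k * of_nat (stirling m k) * of_nat (Stirling k j))" for m j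
  have T_Suc:
    "T (Suc m) j = of_nat m * T m j + (case j of 0 \<Rightarrow> 0 | Suc i \<Rightarrow> - of_nat j * T m j - T m i)" for m j
  proof -
    have shift: "(\<Sum>k\<le>m. (-1) ^ Suc k * of_nat (stirling m (Suc k)) * of_nat (Stirling (Suc k) j))
        = T m j - of_nat (stirling m 0) * of_nat (Stirling 0 j)"
    proof -
      have "T m j = (\<Sum>k\<le>Suc m. (-1) ^ k * of_nat (stirling m k) * of_nat (Stirling k j))"
        unfolding T_def by simp
      then show ?thesis
        unfolding sum.atMost_Suc_shift by simp
    qed
    have "T (Suc m) j
        = (\<Sum>k\<le>m. (-1) ^ Suc k * of_nat (stirling (Suc m) (Suc k)) * of_nat (Stirling (Suc k) j))"
      unfolding T_def sum.atMost_Suc_shift by simp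
    also have "\<dots> = of_nat m * (\<Sum>k\<le>m. (-1) ^ Suc k * of_nat (stirling m (Suc k)) * of_nat (Stirling (Suc k) j))
        + (\<Sum>k\<le>m. (-1) ^ Suc k * of_nat (stirling m k) * of_nat (Stirling (Suc k) j))"
      by (simp add: sum_distrib_left sum.distrib[symmetric] algebra_simps)
    also have "of_nat m * (\<Sum>k\<le>m. (-1) ^ Suc k * of_nat (stirling m (Suc k)) * of_nat (Stirling (Suc k) j))
        = of_nat m * T m j"
      unfolding shift by (cases m) (simp_all add: algebra_simps)
    also have "(\<Sum>k\<le>m. (-1) ^ Suc k * of_nat (stirling m k) * of_nat (Stirling (Suc k) j))
        = (case j of 0 \<Rightarrow> 0 | Suc i \<Rightarrow> - of_nat j * T m j - T m i)"
      unfolding T_def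
      by (cases j) (simp_all add: sum_distrib_left sum_negf[symmetric] sum.distrib[symmetric] algebra_simps)
    finally show ?thesis .
  qed
  have "T m j = (if m = j then (-1) ^ j else 0)" for m j
  proof (induction m arbitrary: j)
    case 0
    show ?case
      by (cases j) (simp_all add: T_def)
  next
    case (Suc m)
    show ?case
      unfolding T_Suc Suc.IH by (cases j) (auto simp: algebra_simps)
  qed
  then show ?thesis
    unfolding T_def .
qed

lemma sum_alternating_Stirling_stirling_shift:
  "(\<Sum>i\<le>n. (-1) ^ i * of_nat (Stirling (i + j) j) * of_nat (stirling (n + j) (i + j)) :: 'a :: comm_ring_1)
     = (if n = 0 then 1 else 0)"
  (is "?S = _")
proof -
  let ?f = "\<lambda>k. (-1) ^ k * of_nat (stirling (n + j) k) * of_nat (Stirling k j) :: 'a"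
  have "sum ?f {..n + j} = sum ?f {..<j} + sum ?f {j..n + j}"
    by (subst sum.union_disjoint[symmetric]) (auto intro: sum.cong)
  also have "sum ?f {..<j} = 0"
    by (intro sum.neutral) auto
  also have "sum ?f {j..n + j} = (\<Sum>i\<le>n. ?f (i + j))"
    using sum.shift_bounds_cl_nat_ivl[of ?f 0 j n] by (simp add: atLeast0AtMost)
  also have "\<dots> = (-1) ^ j * ?S"
    by (simp add: sum_distrib_left power_add algebra_simps)
  finally have "(-1) ^ j * ?S = (if n = 0 then (-1) ^ j else 0)"
    using sum_alternating_stirling_Stirling[of "n + j" j, where 'a='a] by simp
  moreover have "?S = (-1) ^ j * ((-1) ^ j * ?S)"
    by (simp flip: mult.assoc power_mult_distrib)
  ultimately show ?thesis
    by simp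
qed

lemma sum_Stirling_stirling_le:
  "(\<Sum>i\<le>n. Stirling (i + j) j * stirling (n + j) (i + j)) \<le> Suc j ^ (n + j) * fact (n + j)"
proof -
  have "(\<Sum>i\<le>n. Stirling (i + j) j * stirling (n + j) (i + j))
      \<le> (\<Sum>i\<le>n. Suc j ^ (n + j) * stirling (n + j) (i + j))"
  proof (intro sum_mono mult_le_mono1)
    fix i assume "i \<in> {..n}"
    then have "Suc j ^ (i + j) \<le> Suc j ^ (n + j)"
      by (intro power_increasing) auto
    then show "Stirling (i + j) j \<le> Suc j ^ (n + j)"
      using Stirling_le_Suc_power[of "i + j" j] by linarith
  qed
  also have "\<dots> = Suc j ^ (n + j) * (\<Sum>k\<in>(\<lambda>i. i + j) ` {..n}. stirling (n + j) k)"
    by (simp add: sum_distrib_left sum.reindex)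
  also have "\<dots> \<le> Suc j ^ (n + j) * (\<Sum>k\<le>n + j. stirling (n + j) k)"
    by (intro mult_le_mono2 sum_mono2) auto
  finally show ?thesis
    by (simp add: sum_stirling)
qed

lemma summable_power_div_fact_shift:
  fixes x :: "'a :: {real_normed_field, banach}"
  shows "summable (\<lambda>n. x ^ (n + k) / fact (n + k))"
  using summable_ignore_initial_segment[OF summable_exp[of x], of k]
  by (simp add: divide_inverse mult.commute)

lemma summable_Stirling_stirling_antidiagonals:
  "summable (\<lambda>n. (\<Sum>i\<le>n. real (Stirling (i + j) j) * real (stirling (n + j) (i + j)))
                  * (\<bar>t\<bar> ^ (n + j) / fact (n + j) / fact (n + j)))"
proof (rule summable_comparison_test[OF _ summable_power_div_fact_shift[of "Suc j * \<bar>t\<bar>" j]],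
    intro exI allI impI)
  fix n
  let ?S = "\<Sum>i\<le>n. real (Stirling (i + j) j) * real (stirling (n + j) (i + j))"
  let ?c = "\<bar>t\<bar> ^ (n + j) / fact (n + j) / fact (n + j)"
  have "?S \<le> Suc j ^ (n + j) * fact (n + j)"
    using of_nat_mono[OF sum_Stirling_stirling_le[where n = n and j = j], where 'a=real] by simp
  then have "?S * ?c \<le> Suc j ^ (n + j) * fact (n + j) * ?c"
    by (intro mult_right_mono) auto
  then show "norm (?S * ?c) \<le> (Suc j * \<bar>t\<bar>) ^ (n + j) / fact (n + j)"
    by (simp add: abs_mult power_mult_distrib sum_nonneg)
qed

lemma has_sum_rows_if_antidiagonals_sums:
  fixes a :: "nat \<Rightarrow> nat \<Rightarrow> 'a :: banach"
  assumes abs: "summable (\<lambda>n. \<Sum>i\<le>n. norm (a i (n - i)))"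
    and rows: "\<And>i. (a i has_sum r i) UNIV"
    and antidiagonals: "(\<lambda>n. \<Sum>i\<le>n. a i (n - i)) sums s"
  shows "(r has_sum s) UNIV"
proof -
  define d where "d = (\<lambda>(n, i). a i (n - i))"
  have "(\<lambda>x. norm (d x)) summable_on Sigma UNIV atMost"
    by (rule summable_on_SigmaI[OF _ summable_nonneg_imp_summable_on[OF abs]])
       (auto simp: d_def intro: sum_nonneg)
  then obtain V where d_has_sum: "(d has_sum V) (Sigma UNIV atMost)"
    using abs_summable_summable unfolding summable_on_def by blast
  have "((\<lambda>n. \<Sum>i\<le>n. a i (n - i)) has_sum V) UNIV"
    by (rule has_sum_SigmaD[OF d_has_sum]) (auto simp: d_def)
  then have "V = s"
    using antidiagonals by (blast dest: has_sum_imp_sums sums_unique2)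
  have "(d has_sum s) (Sigma UNIV atMost) \<longleftrightarrow> ((\<lambda>(i, l). a i l) has_sum s) (UNIV \<times> UNIV)"
    by (rule has_sum_reindex_bij_witness[where j = "\<lambda>(n, i). (i, n - i)" and i = "\<lambda>(i, l). (l + i, i)"])
       (auto simp: d_def)
  with d_has_sum \<open>V = s\<close> have "((\<lambda>(i, l). a i l) has_sum s) (UNIV \<times> UNIV)"
    by simp
  then show ?thesis
    by (rule has_sum_SigmaD) (simp add: rows)
qed

definition p_coeff :: "nat \<Rightarrow> nat \<Rightarrow> real \<Rightarrow> real" where
  "p_coeff m k t = t ^ m / fact m * real (stirling m k) / fact m"

lemma p_coeff_has_sum: "((\<lambda>i. p_coeff (i + k) k t) has_sum (exp t * p_fun k t)) UNIV"
proof -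
  have "summable (\<lambda>i. norm (p_coeff (i + k) k t))"
  proof (rule summable_comparison_test[OF _ summable_power_div_fact_shift[of "\<bar>t\<bar>" k]])
    have "norm (p_coeff m k t) \<le> \<bar>t\<bar> ^ m / fact m" for m
    proof -
      have "real (stirling m k) / fact m \<le> 1"
        using of_nat_mono[OF stirling_le_fact[of m k], where 'a=real] by (simp add: divide_le_eq_1)
      then have "\<bar>t\<bar> ^ m / fact m * (real (stirling m k) / fact m) \<le> \<bar>t\<bar> ^ m / fact m"
        by (intro mult_left_le) auto
      then show ?thesis
        by (simp add: p_coeff_def abs_mult power_abs)
    qed
    then show "\<exists>N. \<forall>i\<ge>N. norm (norm (p_coeff (i + k) k t)) \<le> \<bar>t\<bar> ^ (i + k) / fact (i + k)"
      by simp
  qed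
  moreover have "exp t * p_fun k t = (\<Sum>i. p_coeff (i + k) k t)"
    by (simp add: p_fun_def p_coeff_def exp_minus)
  ultimately show ?thesis
    by (metis norm_summable_imp_has_sum summable_norm_cancel summable_sums)
qed

theorem lemma2:
  fixes j :: nat and t :: real
  assumes "t \<ge> 0"
  shows "(\<lambda>i. real (Stirling (i + j) j) * fact j * (-1) ^ i * p_fun (i + j) t)
           sums (exp (- t) * t ^ j / fact j)"
proof -
  define a where "a i l = (-1) ^ i * real (Stirling (i + j) j) * p_coeff (l + (i + j)) (i + j) t" for i l
  define c where "c n = t ^ (n + j) / fact (n + j) / fact (n + j)" for n
  have a_antidiagonal:
    "a i (n - i) = (-1) ^ i * real (Stirling (i + j) j) * real (stirling (n + j) (i + j)) * c n" if "i \<le> n" for i n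
    using that by (simp add: a_def c_def p_coeff_def)
  have "(\<Sum>i\<le>n. norm (a i (n - i)))
      = (\<Sum>i\<le>n. real (Stirling (i + j) j) * real (stirling (n + j) (i + j)))
          * (\<bar>t\<bar> ^ (n + j) / fact (n + j) / fact (n + j))" for n
    unfolding sum_distrib_right by (intro sum.cong) (simp_all add: a_antidiagonal c_def abs_mult power_abs)
  then have "summable (\<lambda>n. \<Sum>i\<le>n. norm (a i (n - i)))"
    using summable_Stirling_stirling_antidiagonals[where j = j and t = t] by simp
  moreover have "(a i has_sum ((-1) ^ i * real (Stirling (i + j) j) * (exp t * p_fun (i + j) t))) UNIV" for i
    unfolding a_def by (intro has_sum_cmult_right p_coeff_has_sum)
  moreover have "(\<lambda>n. \<Sum>i\<le>n. a i (n - i)) sums c 0"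
  proof -
    have "(\<Sum>i\<le>n. a i (n - i)) = (if n = 0 then c 0 else 0)" for n
      using sum_alternating_Stirling_stirling_shift[where n = n and j = j, where 'a=real]
      by (simp add: a_antidiagonal flip: sum_distrib_right)
    then show ?thesis
      using sums_single[of 0 "\<lambda>_. c 0"] by simp
  qed
  ultimately have "((\<lambda>i. (-1) ^ i * real (Stirling (i + j) j) * (exp t * p_fun (i + j) t)) has_sum c 0) UNIV"
    by (rule has_sum_rows_if_antidiagonals_sums)
  then have "(\<lambda>i. exp (- t) * fact j * ((-1) ^ i * real (Stirling (i + j) j) * (exp t * p_fun (i + j) t)))
      sums (exp (- t) * fact j * c 0)"
    by (intro has_sum_imp_sums has_sum_cmult_right)
  then show ?thesis
    by (simp add: c_def exp_minus field_simps)
qed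

end
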